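(* Let $q$ be a prime power and $\mathcal{L}$ a non-empty set of lines of $\mathrm{PG}(n,q)$ satisfying (Pt), (Pl), (Sd) and (To) (see context). Suppose $\mathcal{L}$ contains a pentagon with vertices $A,B,C,D,E$ (so $AB,BC,CD,DE,EA\in\mathcal{L}$), and let $U=\langle A,B,C,D,E\rangle$. Then the only $(q+1)$-$U$-points on the line $BE$ of $\mathrm{PG}(n,q)$ are $B$ and $E$.
   Context: (Pt): every point of $\mathrm{PG}(n,q)$ lies on $0$ or $q+1$ lines of $\mathcal{L}$. (Pl): every plane contains $0$, $1$ or $q+1$ lines of $\mathcal{L}$. (Sd): every solid ($3$-dimensional subspace) contains $0$, $1$, $q+1$ or $2q+1$ lines of $\mathcal{L}$. (To): $|\mathcal{L}|\le q^5+q^4+q^3+q^2+q+1$. A pentagon of $\mathcal{L}$ with vertices $A,B,C,D,E$ is a set of five pairwise distinct points such that the lines $AB,BC,CD,DE,EA$ all belong to $\mathcal{L}$ and are pairwise distinct. For a subspace $U$, a point $P$ is a $(q+1)$-$U$-point if exactly $q+1$ lines of $\mathcal{L}$ pass through $P$ and are contained in $U$. *)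

theory Defs
  imports "HOL-Analysis.Analysis"
begin

text \<open>PG(n,q) is modelled as the lattice of subspaces of the vector space
  'a^'n over a finite field 'a, with CARD('a) = q and CARD('n) = n+1.
  A projective subspace of projective dimension k is a vector subspace of
  vector-space dimension k+1.\<close>

definition pg_subspace :: "nat \<Rightarrow> ('a::field ^ 'n) set \<Rightarrow> bool" where
  "pg_subspace k S \<longleftrightarrow> vec.subspace S \<and> vec.dim S = k + 1"

abbreviation pg_point :: "('a::field ^ 'n) set \<Rightarrow> bool" where
  "pg_point P \<equiv> pg_subspace 0 P"
abbreviation pg_line :: "('a::field ^ 'n) set \<Rightarrow> bool" where
  "pg_line l \<equiv> pg_subspace 1 l"
abbreviation pg_plane :: "('a::field ^ 'n) set \<Rightarrow> bool" where
  "pg_plane p \<equiv> pg_subspace 2 p"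
abbreviation pg_solid :: "('a::field ^ 'n) set \<Rightarrow> bool" where
  "pg_solid s \<equiv> pg_subspace 3 s"

definition pg_join :: "('a::field ^ 'n) set list \<Rightarrow> ('a ^ 'n) set" where
  "pg_join Xs = vec.span (\<Union> (set Xs))"

definition cond_Pt :: "('a::{field,finite} ^ 'n) set set \<Rightarrow> bool" where
  "cond_Pt L \<longleftrightarrow> (\<forall>P. pg_point P \<longrightarrow>
     card {l \<in> L. P \<subseteq> l} \<in> {0, CARD('a) + 1})"

definition cond_Pl :: "('a::{field,finite} ^ 'n) set set \<Rightarrow> bool" where
  "cond_Pl L \<longleftrightarrow> (\<forall>\<pi>. pg_plane \<pi> \<longrightarrow>
     card {l \<in> L. l \<subseteq> \<pi>} \<in> {0, 1, CARD('a) + 1})"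

definition cond_Sd :: "('a::{field,finite} ^ 'n) set set \<Rightarrow> bool" where
  "cond_Sd L \<longleftrightarrow> (\<forall>S. pg_solid S \<longrightarrow>
     card {l \<in> L. l \<subseteq> S} \<in> {0, 1, CARD('a) + 1, 2 * CARD('a) + 1})"

definition cond_To :: "('a::{field,finite} ^ 'n) set set \<Rightarrow> bool" where
  "cond_To L \<longleftrightarrow> (let q = CARD('a) in card L \<le> q^5 + q^4 + q^3 + q^2 + q + 1)"

definition pentagon :: "('a::field ^ 'n) set set \<Rightarrow> ('a ^ 'n) set \<Rightarrow> ('a ^ 'n) set
    \<Rightarrow> ('a ^ 'n) set \<Rightarrow> ('a ^ 'n) set \<Rightarrow> ('a ^ 'n) set \<Rightarrow> bool" where
  "pentagon L A B C D E \<longleftrightarrow>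
     pg_point A \<and> pg_point B \<and> pg_point C \<and> pg_point D \<and> pg_point E \<and>
     distinct [A, B, C, D, E] \<and>
     set [pg_join [A,B], pg_join [B,C], pg_join [C,D], pg_join [D,E], pg_join [E,A]] \<subseteq> L \<and>
     distinct [pg_join [A,B], pg_join [B,C], pg_join [C,D], pg_join [D,E], pg_join [E,A]]"

definition qU_point :: "('a::{field,finite} ^ 'n) set set \<Rightarrow> ('a ^ 'n) set \<Rightarrow> ('a ^ 'n) set \<Rightarrow> bool" where
  "qU_point L U P \<longleftrightarrow> pg_point P \<and> card {l \<in> L. P \<subseteq> l \<and> l \<subseteq> U} = CARD('a) + 1"

end

theory Submission
  imports Defs
begin

text \<open>Suppose a point P of BE other than B and E lies on two lines of L inside U. By (Sd), the lines
  of L through a point on two of them are exactly the lines of L in the plane of those two lines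
  (a pencil), and the lines of L in the solid spanned by the pencils at two adjacent vertices are
  those of the two pencils. The solid spanned by the pencils at C and D contains BE; as U has
  projective dimension at most 4, it meets the pencil plane at P in a line through P, which
  therefore belongs to L and passes through C or D. But a line of L through P and C lies in the
  solid spanned by the pencils at A and B, so it passes through B and is BE, which is not in L;
  symmetrically for D.\<close>

section \<open>Subspaces of PG(n,q)\<close>

lemma pg_join_two: "pg_join [X, Y] = vec.span (X \<union> Y)"
  by (simp add: pg_join_def)

lemma card_field_ge_2: "2 \<le> CARD('a::{field,finite})"
proof -
  have "card {0::'a, 1} \<le> CARD('a)" by (rule card_mono) auto
  then show ?thesis by simp
qed

lemma span_Un_spans: "vec.span (vec.span S \<union> vec.span T) = vec.span (S \<union> T)"
  by (simp add: vec.span_Un vec.span_span)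

lemma subset_span_Un: "X \<subseteq> vec.span (X \<union> Y)" "Y \<subseteq> vec.span (X \<union> Y)"
  by (meson le_supE vec.span_superset)+

lemma dim_span_Un_plus_dim_Int:
  assumes "vec.subspace S" "vec.subspace T"
  shows "vec.dim (vec.span (S \<union> T)) + vec.dim (S \<inter> T) = vec.dim S + vec.dim T"
proof -
  have "vec.span (S \<union> T) = {x + y |x y. x \<in> S \<and> y \<in> T}"
    using assms by (simp add: vec.span_Un vec.span_eq_iff[THEN iffD2])
  then show ?thesis using vec.dim_sums_Int[OF assms] by simp
qed

lemma pg_subspace_eq_if_subset: "pg_subspace k S \<Longrightarrow> pg_subspace k T \<Longrightarrow> S \<subseteq> T \<Longrightarrow> S = T"
  unfolding pg_subspace_def by (metis vec.subspace_dim_equal order_refl)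

lemma pg_subspace_meet_join:
  assumes Y: "pg_subspace k Y" and Z: "pg_subspace k Z" and "Y \<noteq> Z"
    and X: "vec.subspace X" "vec.dim X = k" "X \<subseteq> Y" "X \<subseteq> Z"
  shows "Y \<inter> Z = X" "pg_subspace (Suc k) (vec.span (Y \<union> Z))"
proof -
  have sY: "vec.subspace Y" and sZ: "vec.subspace Z" using Y Z by (simp_all add: pg_subspace_def)
  have sYZ: "vec.subspace (Y \<inter> Z)" using sY sZ by (rule vec.subspace_inter)
  have "vec.dim (Y \<inter> Z) \<le> k"
  proof (rule ccontr)
    assume "\<not> ?thesis"
    then have "Y \<inter> Z = Y" "Y \<inter> Z = Z"
      using Y Z vec.subspace_dim_equal[OF sYZ sY] vec.subspace_dim_equal[OF sYZ sZ]
      by (auto simp: pg_subspace_def)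
    then show False using \<open>Y \<noteq> Z\<close> by simp
  qed
  then show meet: "Y \<inter> Z = X" using vec.subspace_dim_equal[OF X(1) sYZ] X by auto
  have "vec.dim (vec.span (Y \<union> Z)) = k + 2"
    using dim_span_Un_plus_dim_Int[OF sY sZ] meet X Y Z by (simp add: pg_subspace_def)
  then show "pg_subspace (Suc k) (vec.span (Y \<union> Z))" by (simp add: pg_subspace_def)
qed

lemma pg_line_join_points:
  assumes "pg_point X" "pg_point Y" "X \<noteq> Y"
  shows "pg_line (vec.span (X \<union> Y))"
proof -
  have "vec.subspace {0}" "vec.dim {0} = 0" "{0} \<subseteq> X" "{0} \<subseteq> Y"
    using assms by (auto simp: vec.subspace_def pg_subspace_def vec.subspace_0)
  from pg_subspace_meet_join(2)[OF assms this] show ?thesis by simp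
qed

lemma pg_line_eq_join_points:
  assumes l: "pg_line l" and "pg_point X" "pg_point Y" "X \<noteq> Y" "X \<subseteq> l" "Y \<subseteq> l"
  shows "l = vec.span (X \<union> Y)"
proof -
  have "vec.span (X \<union> Y) \<subseteq> l"
    using assms by (intro vec.span_minimal) (auto simp: pg_subspace_def)
  then show ?thesis
    using pg_subspace_eq_if_subset[OF pg_line_join_points l] assms by auto
qed

lemma pg_line_through_point_within:
  assumes Z: "vec.subspace Z" "2 \<le> vec.dim Z" and P: "pg_point P" "P \<subseteq> Z"
  obtains k where "pg_line k" "P \<subseteq> k" "k \<subseteq> Z"
proof -
  have "\<not> Z \<subseteq> P" using vec.dim_subset[of Z P] P Z by (auto simp: pg_subspace_def)
  then obtain v where v: "v \<in> Z" "v \<notin> P" by blast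
  let ?k = "vec.span (insert v P)"
  have "vec.dim ?k = 2" using v P by (simp add: vec.dim_insert pg_subspace_def vec.span_eq_iff[THEN iffD2])
  moreover have "P \<subseteq> ?k" by (meson subset_insertI vec.span_superset order_trans)
  moreover have "?k \<subseteq> Z" using v P Z by (intro vec.span_minimal) auto
  ultimately show ?thesis by (intro that[of ?k]) (simp_all add: pg_subspace_def)
qed

lemma pg_lines_in_distinct_planes_eq:
  assumes "pg_plane \<pi>1" "pg_plane \<pi>2" "\<pi>1 \<noteq> \<pi>2"
    and "pg_line l" "pg_line l'" "l \<subseteq> \<pi>1 \<inter> \<pi>2" "l' \<subseteq> \<pi>1 \<inter> \<pi>2"
  shows "l = l'"
proof -
  have s1: "vec.subspace \<pi>1" and s2: "vec.subspace \<pi>2" using assms by (simp_all add: pg_subspace_def)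
  have s12: "vec.subspace (\<pi>1 \<inter> \<pi>2)" using s1 s2 by (rule vec.subspace_inter)
  have "vec.dim (\<pi>1 \<inter> \<pi>2) \<le> 2"
  proof (rule ccontr)
    assume "\<not> ?thesis"
    then have "\<pi>1 \<inter> \<pi>2 = \<pi>1" "\<pi>1 \<inter> \<pi>2 = \<pi>2"
      using assms vec.subspace_dim_equal[OF s12 s1] vec.subspace_dim_equal[OF s12 s2]
      by (auto simp: pg_subspace_def)
    then show False using \<open>\<pi>1 \<noteq> \<pi>2\<close> by simp
  qed
  then have "l = \<pi>1 \<inter> \<pi>2" "l' = \<pi>1 \<inter> \<pi>2"
    using assms vec.subspace_dim_equal[OF _ s12] by (auto simp: pg_subspace_def)
  then show ?thesis by simp
qed

lemma dim_pg_join_points_le: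
  assumes "\<forall>X\<in>set Xs. pg_point X"
  shows "vec.dim (pg_join Xs) \<le> length Xs"
  using assms
proof (induction Xs)
  case Nil
  then show ?case by (simp add: pg_join_def)
next
  case (Cons X Xs)
  have X: "vec.subspace X" "vec.dim X = 1" using Cons.prems by (simp_all add: pg_subspace_def)
  have "pg_join (X # Xs) = vec.span (X \<union> pg_join Xs)"
    using span_Un_spans[of X "\<Union> (set Xs)"] X(1) by (simp add: pg_join_def vec.span_eq_iff[THEN iffD2])
  then show ?case
    using dim_span_Un_plus_dim_Int[OF X(1), of "pg_join Xs"] X Cons
    by (simp add: pg_join_def)
qed

lemma card_vec_subspace:
  fixes S :: "('a::{field,finite} ^ 'n) set"
  assumes S: "vec.subspace S"
  shows "card S = CARD('a) ^ vec.dim S"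
proof -
  obtain B where B: "B \<subseteq> S" "vec.independent B" "S \<subseteq> vec.span B" "card B = vec.dim S"
    using vec.basis_exists by blast
  have spB: "vec.span B = S" using B S by (metis vec.span_minimal subset_antisym)
  let ?f = "\<lambda>c. \<Sum>v\<in>B. c v *s v"
  have "bij_betw ?f (B \<rightarrow>\<^sub>E (UNIV::'a set)) S"
  proof (rule bij_betwI')
    fix c d :: "('a ^ 'n) \<Rightarrow> 'a" assume c: "c \<in> B \<rightarrow>\<^sub>E UNIV" and d: "d \<in> B \<rightarrow>\<^sub>E UNIV"
    show "(?f c = ?f d) = (c = d)"
    proof
      assume "?f c = ?f d"
      then have "(\<Sum>v\<in>B. (c v - d v) *s v) = 0"
        by (simp add: vec.scale_left_diff_distrib sum_subtractf)
      moreover have ind: "\<forall>e. (\<Sum>v\<in>B. e v *s v) = 0 \<longrightarrow> (\<forall>v\<in>B. e v = 0)"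
        using B(2) vec.independent_explicit[of B] by simp
      ultimately have "\<forall>v\<in>B. c v - d v = 0" using spec[OF ind, of "\<lambda>v. c v - d v"] by blast
      then show "c = d" using c d by (auto simp: PiE_def extensional_def fun_eq_iff)
    qed simp
  next
    fix c :: "('a ^ 'n) \<Rightarrow> 'a"
    show "?f c \<in> S" using spB vec.span_finite[of B] by auto
  next
    fix y assume "y \<in> S"
    then obtain u where "y = (\<Sum>v\<in>B. u v *s v)" using spB vec.span_finite[of B] by auto
    then show "\<exists>c\<in>B \<rightarrow>\<^sub>E UNIV. y = ?f c"
      by (intro bexI[of _ "restrict u B"]) auto
  qed
  then have "card S = card (B \<rightarrow>\<^sub>E (UNIV::'a set))" by (simp add: bij_betw_same_card)
  also have "\<dots> = CARD('a) ^ card B" by (simp add: card_PiE)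
  finally show ?thesis using B by simp
qed

lemma card_lines_through_point_in_plane_le:
  fixes X :: "('a::{field,finite} ^ 'n) set"
  assumes \<pi>: "pg_plane \<pi>" and X: "pg_point X" "X \<subseteq> \<pi>"
  shows "card {l. pg_line l \<and> X \<subseteq> l \<and> l \<subseteq> \<pi>} \<le> CARD('a) + 1"
proof -
  define q where "q = CARD('a)"
  define M where "M = {l. pg_line l \<and> X \<subseteq> l \<and> l \<subseteq> \<pi>}"
  have "2 \<le> q" using card_field_ge_2 by (simp add: q_def)
  then have r: "0 < q * q - q" by (simp add: mult_le_mono1)
  have cX: "card X = q" using card_vec_subspace[of X] X by (simp add: pg_subspace_def q_def)
  have card_l: "card (l - X) = q * q - q" if "l \<in> M" for l
    using that card_vec_subspace[of l] card_Diff_subset[of X l] cX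
    by (simp add: M_def pg_subspace_def q_def power2_eq_square)
  have disjoint: "(l - X) \<inter> (l' - X) = {}" if "l \<in> M" "l' \<in> M" "l \<noteq> l'" for l l'
    using pg_subspace_meet_join(1)[of 1 l l' X] that X by (auto simp: M_def pg_subspace_def)
  have "card M * (q * q - q) = card (\<Union>l\<in>M. l - X)"
    using card_UN_disjoint[of M "\<lambda>l. l - X"] card_l disjoint by simp
  also have "\<dots> \<le> card (\<pi> - X)" by (intro card_mono) (auto simp: M_def)
  also have "\<dots> = q * q * q - q"
    using card_vec_subspace[of \<pi>] \<pi> X card_Diff_subset[of X \<pi>] cX
    by (simp add: pg_subspace_def q_def power3_eq_cube)
  also have "\<dots> = (q + 1) * (q * q - q)" by (simp add: algebra_simps diff_mult_distrib2)
  finally have "card M * (q * q - q) \<le> (q + 1) * (q * q - q)" .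
  then have "card M \<le> q + 1" using r mult_le_cancel2 by blast
  then show ?thesis by (simp add: M_def q_def)
qed

section \<open>Line sets satisfying (Pt), (Pl) and (Sd)\<close>

definition lines_through :: "('a::field ^ 'n) set set \<Rightarrow> ('a ^ 'n) set \<Rightarrow> ('a ^ 'n) set set"
  where "lines_through L X = {l \<in> L. X \<subseteq> l}"

definition lines_in :: "('a::field ^ 'n) set set \<Rightarrow> ('a ^ 'n) set \<Rightarrow> ('a ^ 'n) set set"
  where "lines_in L S = {l \<in> L. l \<subseteq> S}"

locale Pt_Pl_Sd =
  fixes L :: "('a::{field,finite} ^ 'n) set set"
  assumes lines: "\<forall>l\<in>L. pg_line l" and Pt: "cond_Pt L" and Pl: "cond_Pl L" and Sd: "cond_Sd L"
begin

lemma line_of_L: "l \<in> L \<Longrightarrow> pg_line l"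
  using lines by blast

lemma card_lines_in_plane:
  assumes "pg_plane \<pi>" "a \<in> L" "b \<in> L" "a \<noteq> b" "a \<subseteq> \<pi>" "b \<subseteq> \<pi>"
  shows "card (lines_in L \<pi>) = CARD('a) + 1"
proof -
  have "{a, b} \<subseteq> lines_in L \<pi>" using assms by (simp add: lines_in_def)
  then have "2 \<le> card (lines_in L \<pi>)" using card_mono[of "lines_in L \<pi>" "{a, b}"] assms by simp
  moreover have "card (lines_in L \<pi>) \<in> {0, 1, CARD('a) + 1}"
    using Pl assms(1) unfolding cond_Pl_def lines_in_def by blast
  ultimately show ?thesis by auto
qed

lemma card_lines_through:
  assumes "pg_point X" "a \<in> L" "X \<subseteq> a"
  shows "card (lines_through L X) = CARD('a) + 1"
proof -
  have "lines_through L X \<noteq> {}" using assms by (auto simp: lines_through_def)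
  then have "card (lines_through L X) \<noteq> 0" by simp
  moreover have "card (lines_through L X) \<in> {0, CARD('a) + 1}"
    using Pt assms(1) unfolding cond_Pt_def lines_through_def by blast
  ultimately show ?thesis by auto
qed

lemma card_lines_in_solid_le:
  assumes "pg_solid S"
  shows "card (lines_in L S) \<le> 2 * CARD('a) + 1"
proof -
  have "card (lines_in L S) \<in> {0, 1, CARD('a) + 1, 2 * CARD('a) + 1}"
    using Sd assms unfolding cond_Sd_def lines_in_def by blast
  then show ?thesis by auto
qed

lemma card_lines_in_distinct_planes_Int_le:
  assumes "pg_plane \<pi>1" "pg_plane \<pi>2" "\<pi>1 \<noteq> \<pi>2"
  shows "card (lines_in L \<pi>1 \<inter> lines_in L \<pi>2) \<le> 1"
  using pg_lines_in_distinct_planes_eq[OF assms] line_of_L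
  by (auto simp: card_le_Suc0_iff_eq lines_in_def)

lemma card_lines_in_two_planes_ge:
  assumes "pg_plane \<pi>1" "pg_plane \<pi>2" "\<pi>1 \<noteq> \<pi>2"
    and "card (lines_in L \<pi>1) = CARD('a) + 1" "card (lines_in L \<pi>2) = CARD('a) + 1"
  shows "2 * CARD('a) + 1 \<le> card (lines_in L \<pi>1 \<union> lines_in L \<pi>2)"
  using card_Un_Int[of "lines_in L \<pi>1" "lines_in L \<pi>2"]
    card_lines_in_distinct_planes_Int_le[OF assms(1-3)] assms(4,5) by simp

text \<open>Two of the planes share at most one line of L, so together they carry at least 3q > 2q + 1
  lines of L.\<close>

lemma no_three_full_planes_in_solid:
  assumes S: "pg_solid S"
    and planes: "pg_plane \<pi>1" "pg_plane \<pi>2" "pg_plane \<pi>3"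
    and distinct: "\<pi>1 \<noteq> \<pi>2" "\<pi>1 \<noteq> \<pi>3" "\<pi>2 \<noteq> \<pi>3"
    and in_S: "\<pi>1 \<subseteq> S" "\<pi>2 \<subseteq> S" "\<pi>3 \<subseteq> S"
    and full: "card (lines_in L \<pi>1) = CARD('a) + 1" "card (lines_in L \<pi>2) = CARD('a) + 1"
      "card (lines_in L \<pi>3) = CARD('a) + 1"
  shows False
proof -
  let ?L1 = "lines_in L \<pi>1" and ?L2 = "lines_in L \<pi>2" and ?L3 = "lines_in L \<pi>3"
  have "(?L1 \<union> ?L2) \<inter> ?L3 = (?L1 \<inter> ?L3) \<union> (?L2 \<inter> ?L3)" by blast
  then have "card ((?L1 \<union> ?L2) \<inter> ?L3) \<le> 2"
    using card_Un_le[of "?L1 \<inter> ?L3" "?L2 \<inter> ?L3"]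
      card_lines_in_distinct_planes_Int_le[OF planes(1,3) distinct(2)]
      card_lines_in_distinct_planes_Int_le[OF planes(2,3) distinct(3)] by simp
  moreover have "2 * CARD('a) + 1 \<le> card (?L1 \<union> ?L2)"
    using card_lines_in_two_planes_ge[OF planes(1,2) distinct(1) full(1,2)] .
  moreover have "card (?L1 \<union> ?L2 \<union> ?L3) \<le> card (lines_in L S)"
    using in_S by (intro card_mono) (auto simp: lines_in_def)
  ultimately show False
    using card_Un_Int[of "?L1 \<union> ?L2" ?L3] full(3) card_lines_in_solid_le[OF S]
      card_field_ge_2[where 'a='a] by simp
qed

text \<open>A line m of L through X outside the plane of a and b would make that plane and the planes
  of a, m and of b, m three full planes of one solid.\<close>

lemma lines_through_subset_plane:
  assumes X: "pg_point X" and a: "a \<in> L" "X \<subseteq> a" and b: "b \<in> L" "X \<subseteq> b" and "a \<noteq> b"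
  shows "lines_through L X \<subseteq> lines_in L (vec.span (a \<union> b))"
proof
  fix m assume "m \<in> lines_through L X"
  then have m: "m \<in> L" "X \<subseteq> m" by (simp_all add: lines_through_def)
  define \<pi> \<alpha> \<beta> where "\<pi> = vec.span (a \<union> b)" and "\<alpha> = vec.span (a \<union> m)" and "\<beta> = vec.span (b \<union> m)"
  show "m \<in> lines_in L \<pi>"
  proof (rule ccontr)
    assume "m \<notin> lines_in L \<pi>"
    then have m_out: "\<not> m \<subseteq> \<pi>" using m by (simp add: lines_in_def)
    have spans: "a \<subseteq> \<pi>" "b \<subseteq> \<pi>" "a \<subseteq> \<alpha>" "m \<subseteq> \<alpha>" "b \<subseteq> \<beta>" "m \<subseteq> \<beta>"
      unfolding \<pi>_def \<alpha>_def \<beta>_def by (simp_all add: subset_span_Un)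
    then have "a \<noteq> m" "b \<noteq> m" using m_out by auto
    have X': "vec.subspace X" "vec.dim X = 1" using X by (simp_all add: pg_subspace_def)
    have planes: "pg_plane \<pi>" "pg_plane \<alpha>" "pg_plane \<beta>"
      using pg_subspace_meet_join(2)[OF line_of_L line_of_L _ X'] a b m \<open>a \<noteq> b\<close> \<open>a \<noteq> m\<close> \<open>b \<noteq> m\<close>
      by (simp_all add: \<pi>_def \<alpha>_def \<beta>_def numeral_2_eq_2)
    have "\<pi> \<noteq> \<alpha>" "\<pi> \<noteq> \<beta>" using m_out spans by auto
    moreover have "\<alpha> \<noteq> \<beta>"
    proof
      assume "\<alpha> = \<beta>"
      then have "\<pi> \<subseteq> \<alpha>" unfolding \<pi>_def
        using spans planes(2) by (intro vec.span_minimal) (auto simp: pg_subspace_def)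
      then show False using pg_subspace_eq_if_subset[OF planes(1,2)] \<open>\<pi> \<noteq> \<alpha>\<close> by simp
    qed
    moreover define S where "S = vec.span (\<pi> \<union> \<alpha>)"
    have "pg_solid S"
      using pg_subspace_meet_join(2)[OF planes(1,2) \<open>\<pi> \<noteq> \<alpha>\<close>, of a] line_of_L[OF a(1)] spans
      by (simp add: S_def pg_subspace_def numeral_3_eq_3)
    moreover have "\<pi> \<subseteq> S" "\<alpha> \<subseteq> S" unfolding S_def by (simp_all add: subset_span_Un)
    moreover have "\<beta> \<subseteq> S"
      unfolding \<beta>_def using spans \<open>\<pi> \<subseteq> S\<close> \<open>\<alpha> \<subseteq> S\<close>
      by (intro vec.span_minimal) (auto simp: S_def)
    ultimately show False
      using no_three_full_planes_in_solid[OF _ planes] card_lines_in_plane[OF planes(1) a(1) b(1)]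
        card_lines_in_plane[OF planes(2) a(1) m(1)] card_lines_in_plane[OF planes(3) b(1) m(1)]
        spans \<open>a \<noteq> b\<close> \<open>a \<noteq> m\<close> \<open>b \<noteq> m\<close> by blast
  qed
qed

lemma lines_through_eq_lines_in_plane:
  assumes X: "pg_point X" and a: "a \<in> L" "X \<subseteq> a" and b: "b \<in> L" "X \<subseteq> b" and "a \<noteq> b"
  shows "pg_plane (vec.span (a \<union> b))" "lines_through L X = lines_in L (vec.span (a \<union> b))"
proof -
  have X': "vec.subspace X" "vec.dim X = 1" using X by (simp_all add: pg_subspace_def)
  show plane: "pg_plane (vec.span (a \<union> b))"
    using pg_subspace_meet_join(2)[OF line_of_L line_of_L \<open>a \<noteq> b\<close> X'] a b
    by (simp add: numeral_2_eq_2)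
  show "lines_through L X = lines_in L (vec.span (a \<union> b))"
    using card_subset_eq[OF _ lines_through_subset_plane[OF assms]]
      card_lines_through[OF X a] card_lines_in_plane[OF plane a(1) b(1) \<open>a \<noteq> b\<close>]
    by (simp add: subset_span_Un)
qed

lemma line_in_pencil_plane_in_L:
  assumes X: "pg_point X" and a: "a \<in> L" "X \<subseteq> a" and b: "b \<in> L" "X \<subseteq> b" and "a \<noteq> b"
    and k: "pg_line k" "X \<subseteq> k" "k \<subseteq> vec.span (a \<union> b)"
  shows "k \<in> L"
proof -
  let ?\<pi> = "vec.span (a \<union> b)"
  note pencil = lines_through_eq_lines_in_plane[OF assms(1-6)]
  have "X \<subseteq> ?\<pi>" using a subset_span_Un by blast
  let ?K = "{l. pg_line l \<and> X \<subseteq> l \<and> l \<subseteq> ?\<pi>}"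
  have "lines_through L X \<subseteq> ?K"
    using pencil(2) line_of_L by (auto simp: lines_through_def lines_in_def)
  moreover have "card ?K \<le> card (lines_through L X)"
    using card_lines_through_point_in_plane_le[OF pencil(1) X \<open>X \<subseteq> ?\<pi>\<close>]
      card_lines_through[OF X a] by simp
  ultimately have "lines_through L X = ?K" by (intro card_seteq) simp_all
  then show ?thesis using k by (auto simp: lines_through_def)
qed

text \<open>The two pencil planes already carry the maximal number 2q + 1 of lines of L in a solid.\<close>

lemma lines_in_join_of_adjacent_pencils:
  assumes X: "pg_point X" and Y: "pg_point Y" "X \<noteq> Y" and l: "l \<in> L" "X \<subseteq> l" "Y \<subseteq> l"
    and a: "a \<in> L" "X \<subseteq> a" "a \<noteq> l" and b: "b \<in> L" "Y \<subseteq> b" "b \<noteq> l"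
  shows "pg_solid (vec.span (a \<union> l \<union> b))"
    "lines_in L (vec.span (a \<union> l \<union> b)) = lines_through L X \<union> lines_through L Y"
proof -
  define \<pi>X \<pi>Y where "\<pi>X = vec.span (a \<union> l)" and "\<pi>Y = vec.span (l \<union> b)"
  note pencil_X = lines_through_eq_lines_in_plane[OF X a(1,2) l(1,2) a(3), folded \<pi>X_def]
  note pencil_Y = lines_through_eq_lines_in_plane[OF Y(1) l(1,3) b(1,2) b(3)[symmetric], folded \<pi>Y_def]
  have spans: "l \<subseteq> \<pi>X" "l \<subseteq> \<pi>Y" "b \<subseteq> \<pi>Y" unfolding \<pi>X_def \<pi>Y_def
    by (simp_all add: subset_span_Un)
  have "\<pi>X \<noteq> \<pi>Y"
  proof
    assume "\<pi>X = \<pi>Y"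
    have "b \<in> lines_in L \<pi>Y" using b(1) spans by (simp add: lines_in_def)
    then have "b \<in> lines_through L X" using \<open>\<pi>X = \<pi>Y\<close> pencil_X(2) by simp
    then have "X \<subseteq> b" by (simp add: lines_through_def)
    then show False
      using pg_line_eq_join_points[OF line_of_L[OF b(1)] X Y] pg_line_eq_join_points[OF line_of_L[OF l(1)] X Y]
        b l by simp
  qed
  have join: "vec.span (a \<union> l \<union> b) = vec.span (\<pi>X \<union> \<pi>Y)"
    unfolding \<pi>X_def \<pi>Y_def span_Un_spans by (simp add: Un_ac)
  show solid: "pg_solid (vec.span (a \<union> l \<union> b))"
    using pg_subspace_meet_join(2)[OF pencil_X(1) pencil_Y(1) \<open>\<pi>X \<noteq> \<pi>Y\<close>, of l] line_of_L[OF l(1)] spans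
    by (simp add: join pg_subspace_def numeral_3_eq_3)
  have "lines_in L \<pi>X \<union> lines_in L \<pi>Y \<subseteq> lines_in L (vec.span (a \<union> l \<union> b))"
    unfolding join using vec.span_superset[of "\<pi>X \<union> \<pi>Y"] by (auto simp: lines_in_def)
  moreover have "2 * CARD('a) + 1 \<le> card (lines_in L \<pi>X \<union> lines_in L \<pi>Y)"
    using card_lines_in_two_planes_ge[OF pencil_X(1) pencil_Y(1) \<open>\<pi>X \<noteq> \<pi>Y\<close>]
      pencil_X(2) pencil_Y(2) card_lines_through[OF X a(1,2)] card_lines_through[OF Y(1) b(1,2)] by simp
  ultimately have "lines_in L \<pi>X \<union> lines_in L \<pi>Y = lines_in L (vec.span (a \<union> l \<union> b))"
    using card_lines_in_solid_le[OF solid] by (intro card_seteq) simp_all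
  then show "lines_in L (vec.span (a \<union> l \<union> b)) = lines_through L X \<union> lines_through L Y"
    using pencil_X(2) pencil_Y(2) by simp
qed

lemma qU_point_if_on_two_lines:
  assumes X: "pg_point X" and a: "a \<in> L" "X \<subseteq> a" and b: "b \<in> L" "X \<subseteq> b" and "a \<noteq> b"
    and U: "vec.subspace U" "a \<subseteq> U" "b \<subseteq> U"
  shows "qU_point L U X"
proof -
  have "vec.span (a \<union> b) \<subseteq> U" using U by (intro vec.span_minimal) auto
  then have "{l \<in> L. X \<subseteq> l \<and> l \<subseteq> U} = lines_through L X"
    using lines_through_eq_lines_in_plane(2)[OF assms(1-6)] by (auto simp: lines_through_def lines_in_def)
  then show ?thesis using card_lines_through[OF X a] X by (simp add: qU_point_def)
qed

end

section \<open>Pentagons\<close>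

lemma pg_join_two_commute: "pg_join [X, Y] = pg_join [Y, X]"
  by (simp add: pg_join_def Un_commute)

lemma pentagon_rev:
  assumes "pentagon L A B C D E"
  shows "pentagon L A E D C B"
proof -
  have sides: "[pg_join [A,E], pg_join [E,D], pg_join [D,C], pg_join [C,B], pg_join [B,A]]
     = rev [pg_join [A,B], pg_join [B,C], pg_join [C,D], pg_join [D,E], pg_join [E,A]]"
    by (simp only: pg_join_two_commute[of A E] pg_join_two_commute[of E D] pg_join_two_commute[of D C]
        pg_join_two_commute[of C B] pg_join_two_commute[of B A] rev.simps append.simps)
  have vertices: "[A,E,D,C,B] = rev (rotate1 [A,B,C,D,E])" by simp
  show ?thesis
    using assms unfolding pentagon_def sides vertices set_rev distinct_rev distinct1_rotate by blast
qed

locale pentagon_config = Pt_Pl_Sd L for L :: "('a::{field,finite} ^ 'n) set set" +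
  fixes A B C D E :: "('a ^ 'n) set"
  assumes pentagon: "pentagon L A B C D E"
begin

lemma vertices: "pg_point A" "pg_point B" "pg_point C" "pg_point D" "pg_point E"
  and vertices_distinct: "A \<noteq> B" "C \<noteq> D" "E \<noteq> A" "B \<noteq> E"
  and sides_in_L: "vec.span (A \<union> B) \<in> L" "vec.span (B \<union> C) \<in> L" "vec.span (C \<union> D) \<in> L"
    "vec.span (D \<union> E) \<in> L" "vec.span (E \<union> A) \<in> L"
  and sides_distinct: "vec.span (A \<union> B) \<noteq> vec.span (B \<union> C)"
    "vec.span (B \<union> C) \<noteq> vec.span (C \<union> D)" "vec.span (C \<union> D) \<noteq> vec.span (D \<union> E)"
    "vec.span (D \<union> E) \<noteq> vec.span (E \<union> A)" "vec.span (A \<union> B) \<noteq> vec.span (E \<union> A)"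
  using pentagon by (auto simp: pentagon_def pg_join_two)

lemma pentagon_config_rev: "pentagon_config L A E D C B"
  using pentagon_rev[OF pentagon] by (intro pentagon_config.intro Pt_Pl_Sd_axioms pentagon_config_axioms.intro)

lemma pencil_at_A: "lines_through L A = lines_in L (vec.span (E \<union> A \<union> B))"
proof -
  have "vec.span (vec.span (E \<union> A) \<union> vec.span (A \<union> B)) = vec.span (E \<union> A \<union> B)"
    unfolding span_Un_spans by (simp add: Un_ac)
  then show ?thesis
    using lines_through_eq_lines_in_plane(2)[OF vertices(1) sides_in_L(5) _ sides_in_L(1) _ sides_distinct(5)[symmetric]]
      subset_span_Un[where X=E and Y=A] subset_span_Un[where X=A and Y=B] by simp
qed

lemma C_notin_pencil_plane_at_A: "\<not> C \<subseteq> vec.span (E \<union> A \<union> B)"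
proof
  assume "C \<subseteq> vec.span (E \<union> A \<union> B)"
  then have "vec.span (B \<union> C) \<subseteq> vec.span (E \<union> A \<union> B)"
    by (intro vec.span_minimal) (auto intro: vec.span_base)
  then have "vec.span (B \<union> C) \<in> lines_through L A"
    using pencil_at_A sides_in_L(2) by (simp add: lines_in_def)
  then have "vec.span (B \<union> C) = vec.span (A \<union> B)"
    using pg_line_eq_join_points[OF line_of_L[OF sides_in_L(2)] vertices(1,2) vertices_distinct(1)]
      subset_span_Un[where X=B and Y=C] by (simp add: lines_through_def)
  then show False using sides_distinct(1) by simp
qed

lemma BE_notin_L: "vec.span (B \<union> E) \<notin> L"
proof
  assume BE: "vec.span (B \<union> E) \<in> L"
  have "vec.span (B \<union> E) \<subseteq> vec.span (E \<union> A \<union> B)" by (intro vec.span_mono) auto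
  then have "A \<subseteq> vec.span (B \<union> E)" using pencil_at_A BE by (auto simp: lines_in_def lines_through_def)
  then have "vec.span (B \<union> E) = vec.span (A \<union> B)"
    using pg_line_eq_join_points[OF line_of_L[OF BE] vertices(1,2) vertices_distinct(1)]
      subset_span_Un[where X=B and Y=E] by simp
  then have "vec.span (A \<union> B) = vec.span (E \<union> A)"
    using pg_line_eq_join_points[OF line_of_L[OF sides_in_L(1)] vertices(5,1) vertices_distinct(3)]
      subset_span_Un[where X=A and Y=B] subset_span_Un[where X=B and Y=E] by simp
  then show False using sides_distinct(5) by simp
qed

lemma no_L_line_joins_C_to_BE:
  assumes P: "pg_point P" "P \<subseteq> vec.span (B \<union> E)" "P \<noteq> B"
    and k: "k \<in> L" "P \<subseteq> k" "C \<subseteq> k"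
  shows False
proof -
  let ?\<pi>A = "vec.span (E \<union> A \<union> B)"
  let ?S = "vec.span (vec.span (E \<union> A) \<union> vec.span (A \<union> B) \<union> vec.span (B \<union> C))"
  have "P \<subseteq> ?\<pi>A" using P(2) vec.span_mono[of "B \<union> E" "E \<union> A \<union> B"] by auto
  then have "P \<noteq> C" using C_notin_pencil_plane_at_A by auto
  then have k_eq: "k = vec.span (P \<union> C)"
    using pg_line_eq_join_points[OF line_of_L[OF k(1)] P(1) vertices(3)] k by simp
  have "?\<pi>A \<subseteq> ?S" by (intro vec.span_mono) (use subset_span_Un in blast)
  then have "P \<union> C \<subseteq> ?S" using \<open>P \<subseteq> ?\<pi>A\<close> subset_span_Un[where X=B and Y=C] by (blast intro: vec.span_base)
  then have "k \<in> lines_in L ?S" using k(1) k_eq by (simp add: lines_in_def vec.span_minimal)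
  then have "k \<in> lines_through L A \<union> lines_through L B"
    using lines_in_join_of_adjacent_pencils(2)[OF vertices(1,2) vertices_distinct(1) sides_in_L(1)
        _ _ sides_in_L(5) _ sides_distinct(5)[symmetric] sides_in_L(2) _ sides_distinct(1)[symmetric]]
      subset_span_Un[where X=A and Y=B] subset_span_Un[where X=E and Y=A]
      subset_span_Un[where X=B and Y=C] by simp
  then show False
  proof
    assume "k \<in> lines_through L A"
    then show False using pencil_at_A C_notin_pencil_plane_at_A k(3) by (auto simp: lines_in_def)
  next
    assume "k \<in> lines_through L B"
    then have "k = vec.span (P \<union> B)"
      using pg_line_eq_join_points[OF line_of_L[OF k(1)] P(1) vertices(2) P(3)] k(2)
      by (simp add: lines_through_def)
    moreover have "vec.span (B \<union> E) = vec.span (P \<union> B)"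
      using pg_line_eq_join_points[OF pg_line_join_points[OF vertices(2,5) vertices_distinct(4)] P(1)
          vertices(2) P(3) P(2)] subset_span_Un[where X=B and Y=E] by simp
    ultimately show False using BE_notin_L k(1) by simp
  qed
qed

lemma L_line_through_C_or_D:
  assumes P: "pg_point P" "P \<subseteq> vec.span (B \<union> E)"
    and l: "l \<in> L" "P \<subseteq> l" "l \<subseteq> pg_join [A, B, C, D, E]"
    and m: "m \<in> L" "P \<subseteq> m" "m \<subseteq> pg_join [A, B, C, D, E]" and "l \<noteq> m"
  obtains k where "k \<in> L" "P \<subseteq> k" "C \<subseteq> k \<or> D \<subseteq> k"
proof -
  let ?U = "pg_join [A, B, C, D, E]"
  let ?W = "vec.span (vec.span (B \<union> C) \<union> vec.span (C \<union> D) \<union> vec.span (D \<union> E))"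
  let ?\<pi> = "vec.span (l \<union> m)"
  note W = lines_in_join_of_adjacent_pencils[OF vertices(3,4) vertices_distinct(2) sides_in_L(3)
      _ _ sides_in_L(2) _ sides_distinct(2) sides_in_L(4) _ sides_distinct(3)[symmetric],
      OF subset_span_Un[where X=C and Y=D] subset_span_Un(2)[where X=B and Y=C]
      subset_span_Un(1)[where X=D and Y=E]]
  have \<pi>: "pg_plane ?\<pi>" using lines_through_eq_lines_in_plane(1)[OF P(1) l(1,2) m(1,2) \<open>l \<noteq> m\<close>] .
  have U: "vec.subspace ?U" "vec.dim ?U \<le> 5"
    using dim_pg_join_points_le[of "[A, B, C, D, E]"] vertices by (simp_all add: pg_join_def)
  have "B \<subseteq> ?U" "C \<subseteq> ?U" "D \<subseteq> ?U" "E \<subseteq> ?U" by (auto simp: pg_join_def intro: vec.span_base)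
  then have "?W \<subseteq> ?U" using U(1) by (intro vec.span_minimal Un_least) auto
  moreover have "?\<pi> \<subseteq> ?U" using U(1) l(3) m(3) by (intro vec.span_minimal) auto
  ultimately have "vec.span (?\<pi> \<union> ?W) \<subseteq> ?U" using U(1) by (simp add: vec.span_minimal)
  then have "vec.dim (vec.span (?\<pi> \<union> ?W)) \<le> 5" using vec.dim_subset U(2) by (meson order_trans)
  then have dim: "2 \<le> vec.dim (?\<pi> \<inter> ?W)"
    using dim_span_Un_plus_dim_Int[of ?\<pi> ?W] \<pi> W(1) by (simp add: pg_subspace_def)
  have "vec.span (B \<union> E) \<subseteq> ?W" by (intro vec.span_minimal) (auto intro: vec.span_base)
  then have "P \<subseteq> ?\<pi> \<inter> ?W" using P(2) l(2) subset_span_Un[where X=l and Y=m] by auto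
  moreover have "vec.subspace (?\<pi> \<inter> ?W)" using \<pi> W(1) by (simp add: pg_subspace_def vec.subspace_inter)
  ultimately obtain k where k: "pg_line k" "P \<subseteq> k" "k \<subseteq> ?\<pi> \<inter> ?W"
    using pg_line_through_point_within dim P(1) by blast
  have "k \<in> L" using line_in_pencil_plane_in_L[OF P(1) l(1,2) m(1,2) \<open>l \<noteq> m\<close> k(1,2)] k(3) by simp
  then have "k \<in> lines_through L C \<union> lines_through L D"
    using W(2) k(3) by (auto simp: lines_in_def)
  then show ?thesis using that \<open>k \<in> L\<close> k(2) by (auto simp: lines_through_def)
qed

lemma B_E_qU_points:
  "qU_point L (pg_join [A, B, C, D, E]) B" "qU_point L (pg_join [A, B, C, D, E]) E"
proof -
  let ?U = "pg_join [A, B, C, D, E]"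
  have U: "vec.subspace ?U" by (simp add: pg_join_def)
  have vertices_in_U: "A \<subseteq> ?U" "B \<subseteq> ?U" "C \<subseteq> ?U" "D \<subseteq> ?U" "E \<subseteq> ?U"
    by (auto simp: pg_join_def intro: vec.span_base)
  have side_in_U: "vec.span (X \<union> Y) \<subseteq> ?U" if "X \<subseteq> ?U" "Y \<subseteq> ?U" for X Y
    using that U by (intro vec.span_minimal) auto
  show "qU_point L ?U B"
    by (rule qU_point_if_on_two_lines[OF vertices(2) sides_in_L(1) _ sides_in_L(2) _ sides_distinct(1) U])
      (simp_all add: subset_span_Un side_in_U vertices_in_U)
  show "qU_point L ?U E"
    by (rule qU_point_if_on_two_lines[OF vertices(5) sides_in_L(4) _ sides_in_L(5) _ sides_distinct(4) U])
      (simp_all add: subset_span_Un side_in_U vertices_in_U)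
qed

lemma qU_point_on_BE_is_vertex:
  assumes P: "P \<subseteq> pg_join [B, E]" "qU_point L (pg_join [A, B, C, D, E]) P"
  shows "P = B \<or> P = E"
proof (rule ccontr)
  assume not_vertex: "\<not> (P = B \<or> P = E)"
  let ?M = "{l \<in> L. P \<subseteq> l \<and> l \<subseteq> pg_join [A, B, C, D, E]}"
  have "pg_point P" and "card ?M = CARD('a) + 1" using P(2) by (simp_all add: qU_point_def)
  then have "\<not> card ?M \<le> 1" using card_field_ge_2[where 'a='a] by simp
  then obtain l m where l: "l \<in> L" "P \<subseteq> l" "l \<subseteq> pg_join [A, B, C, D, E]"
    and m: "m \<in> L" "P \<subseteq> m" "m \<subseteq> pg_join [A, B, C, D, E]" and "l \<noteq> m"
    by (auto simp: card_le_Suc0_iff_eq)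
  moreover have "P \<subseteq> vec.span (B \<union> E)" using P(1) by (simp add: pg_join_two)
  ultimately obtain k where k: "k \<in> L" "P \<subseteq> k" "C \<subseteq> k \<or> D \<subseteq> k"
    using L_line_through_C_or_D \<open>pg_point P\<close> by metis
  from k(3) show False
  proof
    assume "C \<subseteq> k"
    then show False
      using no_L_line_joins_C_to_BE[OF \<open>pg_point P\<close> \<open>P \<subseteq> vec.span (B \<union> E)\<close> _ k(1,2)]
        not_vertex by blast
  next
    assume "D \<subseteq> k"
    then show False
      using pentagon_config.no_L_line_joins_C_to_BE[OF pentagon_config_rev \<open>pg_point P\<close> _ _ k(1,2)]
        \<open>P \<subseteq> vec.span (B \<union> E)\<close> not_vertex by (simp add: Un_commute)
  qed
qed

end

theorem proposition1:
  fixes L :: "('a::{field,finite} ^ 'n) set set"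
    and A B C D E :: "('a ^ 'n) set"
  assumes lines: "\<forall>l\<in>L. pg_line l"
    and nonempty: "L \<noteq> {}"
    and Pt: "cond_Pt L" and Pl: "cond_Pl L" and Sd: "cond_Sd L" and To: "cond_To L"
    and pent: "pentagon L A B C D E"
  shows "{P. P \<subseteq> pg_join [B, E] \<and> qU_point L (pg_join [A, B, C, D, E]) P} = {B, E}"
proof -
  interpret pentagon_config L A B C D E
    using lines Pt Pl Sd pent by (intro pentagon_config.intro Pt_Pl_Sd.intro pentagon_config_axioms.intro)
  show ?thesis
    using B_E_qU_points qU_point_on_BE_is_vertex subset_span_Un[where X=B and Y=E]
    by (auto simp: pg_join_two)
qed

end
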